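(* Let $n\ge 2$ be an integer, let $G$ be a graph and let $V_1,\dots,V_t$ be pairwise disjoint subsets of $V(G)$ such that, for each $j\in[t-1]$, every vertex of the bipartite graph $G[V_j,V_{j+1}]$ has degree between $\delta$ and $\Delta$ in it. Let $T_1,\dots,T_n\subseteq V(G)$ be such that $|T_i\cap V_j|\le r$ for all $i\in[n]$, $j\in[t]$. Assume $1-\delta/\Delta\le t^{-1/2}\log n$. Then there exist matchings $M_j$ in $G[V_j,V_{j+1}]$ for $j\in[t-1]$ such that, letting $Y$ be the set consisting of all vertices $y\in V_1\cup V_t$ that belong to neither $M_1$ nor $M_{t-1}$, together with all vertices $y\in V_j$ with $2\le j\le t-1$ that do not belong to both $M_{j-1}$ and $M_j$, we have $|Y|\le 10\,|\bigcup_{i=1}^t V_i|\,t^{-1/2}\log n$ and $|Y\cap T_i|\le 10rt^{1/2}\log n$ for all $i\in[n]$.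
   Context: Logarithms are base 2. For disjoint $X,Y\subseteq V(G)$, $G[X,Y]$ is the bipartite subgraph with parts $X$ and $Y$ consisting of all edges of $G$ between $X$ and $Y$. *)

theory Defs
  imports Complex_Main
begin

definition simple_graph :: "'a set \<Rightarrow> ('a \<Rightarrow> 'a \<Rightarrow> bool) \<Rightarrow> bool" where
  "simple_graph VG E \<longleftrightarrow> finite VG \<and> (\<forall>u v. E u v \<longrightarrow> u \<in> VG \<and> v \<in> VG)
     \<and> (\<forall>u v. E u v \<longrightarrow> E v u) \<and> (\<forall>u. \<not> E u u)"

definition bip_degree :: "('a \<Rightarrow> 'a \<Rightarrow> bool) \<Rightarrow> 'a set \<Rightarrow> 'a set \<Rightarrow> 'a \<Rightarrow> nat" where
  "bip_degree E X Y v =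
     (if v \<in> X then card {u \<in> Y. E v u} else if v \<in> Y then card {u \<in> X. E v u} else 0)"

definition bip_matching :: "('a \<Rightarrow> 'a \<Rightarrow> bool) \<Rightarrow> 'a set \<Rightarrow> 'a set \<Rightarrow> ('a \<times> 'a) set \<Rightarrow> bool" where
  "bip_matching E X Y M \<longleftrightarrow>
     (\<forall>(x, y) \<in> M. x \<in> X \<and> y \<in> Y \<and> E x y) \<and>
     (\<forall>e \<in> M. \<forall>e' \<in> M. e \<noteq> e' \<longrightarrow>
        {fst e, snd e} \<inter> {fst e', snd e'} = {})"

definition match_verts :: "('a \<times> 'a) set \<Rightarrow> 'a set" where
  "match_verts M = fst ` M \<union> snd ` M"

end

theory Submission
  imports Defs "HOL-Library.FuncSet" "HOL-Combinatorics.Transposition"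
begin

text \<open>Every \<open>G[V\<^sub>j, V\<^sub>j\<^sub>+\<^sub>1]\<close> has maximum degree at most \<open>\<Delta>\<close>, so by Koenig's theorem its edges split
  into \<open>K = \<lfloor>\<Delta>\<rfloor>\<close> matchings, and a vertex of degree \<open>d \<ge> \<delta>\<close> is missed by \<open>K - d \<le> x K\<close> of them,
  where \<open>x = t\<^sup>-\<^sup>1\<^sup>/\<^sup>2 log n\<close>. Pick one of these matchings for every \<open>j\<close>, independently and uniformly;
  probabilities are counted over the finite set of choice functions. Every vertex of \<open>Y\<close> is missed by
  one of the chosen matchings, so \<open>|Y|\<close> has mean at most \<open>2x |\<Union>V\<^sub>i|\<close> and Markov's inequality bounds it
  with probability \<open>4/5\<close>. Each \<open>|Y \<inter> T\<^sub>i|\<close> is at most a sum of \<open>t - 1\<close> independent terms in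
  \<open>[0, 2r]\<close> with means at most \<open>2rx\<close>, so an exponential-moment bound makes \<open>|Y \<inter> T\<^sub>i| > 10rxt\<close> have
  probability at most \<open>e\<^sup>-\<^sup>3\<^sup>x\<^sup>t \<le> n\<^sup>-\<^sup>3\<close>; a union bound over \<open>i\<close> leaves a good choice.\<close>

section \<open>Koenig's edge colouring theorem\<close>

text \<open>Edges are pairs \<open>(x, y)\<close> from a left to a right side, so for a bipartite edge set
  (\<open>fst ` F \<inter> snd ` F = {}\<close>) two edges can only meet in the same coordinate.\<close>

definition proper_edge_colouring :: "('a \<times> 'a) set \<Rightarrow> ('a \<times> 'a \<Rightarrow> nat) \<Rightarrow> bool" where
  "proper_edge_colouring F col \<longleftrightarrow>
     (\<forall>e\<in>F. \<forall>e'\<in>F. e \<noteq> e' \<and> (fst e = fst e' \<or> snd e = snd e') \<longrightarrow> col e \<noteq> col e')"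

inductive_set kempe_chain :: "('a \<times> 'a) set \<Rightarrow> ('a \<times> 'a \<Rightarrow> nat) \<Rightarrow> nat \<Rightarrow> nat \<Rightarrow> 'a \<Rightarrow> 'a set"
  for F col \<alpha> \<beta> w where
  start: "w \<in> kempe_chain F col \<alpha> \<beta> w"
| left: "y \<in> kempe_chain F col \<alpha> \<beta> w \<Longrightarrow> (x, y) \<in> F \<Longrightarrow> col (x, y) = \<alpha> \<Longrightarrow> x \<in> kempe_chain F col \<alpha> \<beta> w"
| right: "x \<in> kempe_chain F col \<alpha> \<beta> w \<Longrightarrow> (x, y) \<in> F \<Longrightarrow> col (x, y) = \<beta> \<Longrightarrow> y \<in> kempe_chain F col \<alpha> \<beta> w"

lemma kempe_chain_edge_iff:
  assumes proper: "proper_edge_colouring F col" and bip: "fst ` F \<inter> snd ` F = {}"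
    and w_right: "w \<notin> fst ` F" and w_free: "\<forall>x. (x, w) \<in> F \<longrightarrow> col (x, w) \<noteq> \<beta>"
    and e: "(x, y) \<in> F" "col (x, y) \<in> {\<alpha>, \<beta>}"
  shows "x \<in> kempe_chain F col \<alpha> \<beta> w \<longleftrightarrow> y \<in> kempe_chain F col \<alpha> \<beta> w"
proof
  assume x: "x \<in> kempe_chain F col \<alpha> \<beta> w"
  show "y \<in> kempe_chain F col \<alpha> \<beta> w"
  proof (cases "col (x, y) = \<beta>")
    case True
    then show ?thesis using x e by (blast intro: kempe_chain.right)
  next
    case False
    with e have \<alpha>: "col (x, y) = \<alpha>" by blast
    from x show ?thesis
    proof cases
      case start
      then show ?thesis using w_right e by force
    next
      case (left y')
      then have "y' = y" using proper e \<alpha> unfolding proper_edge_colouring_def by force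
      then show ?thesis using left by simp
    next
      case (right x')
      then show ?thesis using bip e by force
    qed
  qed
next
  assume y: "y \<in> kempe_chain F col \<alpha> \<beta> w"
  show "x \<in> kempe_chain F col \<alpha> \<beta> w"
  proof (cases "col (x, y) = \<alpha>")
    case True
    then show ?thesis using y e by (blast intro: kempe_chain.left)
  next
    case False
    with e have \<beta>: "col (x, y) = \<beta>" by blast
    from y show ?thesis
    proof cases
      case start
      then show ?thesis using w_free e \<beta> by blast
    next
      case (left y')
      then show ?thesis using bip e by force
    next
      case (right x')
      then have "x' = x" using proper e \<beta> unfolding proper_edge_colouring_def by force
      then show ?thesis using right by simp
    qed
  qed
qed

lemma not_in_kempe_chain:
  assumes "u \<noteq> w" "u \<notin> snd ` F" "\<forall>y. (u, y) \<in> F \<longrightarrow> col (u, y) \<noteq> \<alpha>"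
  shows "u \<notin> kempe_chain F col \<alpha> \<beta> w"
proof
  assume "u \<in> kempe_chain F col \<alpha> \<beta> w"
  then show False
    by cases (use assms in force)+
qed

text \<open>For an \<open>\<alpha>\<close>/\<open>\<beta>\<close>-edge, having its left end on the Kempe chain is the same as having both
  ends on it, which is what keeps the swap proper.\<close>

lemma proper_edge_colouring_kempe_swap:
  fixes \<alpha> \<beta> :: nat
  assumes proper: "proper_edge_colouring F col" and bip: "fst ` F \<inter> snd ` F = {}"
    and w_right: "w \<notin> fst ` F" and w_free: "\<forall>x. (x, w) \<in> F \<longrightarrow> col (x, w) \<noteq> \<beta>"
  defines "R \<equiv> kempe_chain F col \<alpha> \<beta> w"
  shows "proper_edge_colouring F
           (\<lambda>e. if fst e \<in> R then transpose \<alpha> \<beta> (col e) else col e)" (is "proper_edge_colouring F ?col")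
  unfolding proper_edge_colouring_def
proof (intro ballI impI)
  fix e e' assume ee': "e \<in> F" "e' \<in> F" and meet: "e \<noteq> e' \<and> (fst e = fst e' \<or> snd e = snd e')"
  then have ne: "col e \<noteq> col e'" using proper unfolding proper_edge_colouring_def by blast
  show "?col e \<noteq> ?col e'"
  proof (cases "fst e \<in> R \<longleftrightarrow> fst e' \<in> R")
    case True
    then show ?thesis using ne by (auto simp: transpose_eq_iff)
  next
    case False
    then have snd: "snd e = snd e'" using meet by auto
    have chain: "fst f \<in> R \<longleftrightarrow> snd f \<in> R" if "f \<in> F" "col f \<in> {\<alpha>, \<beta>}" for f
      using kempe_chain_edge_iff[OF proper bip w_right w_free, of "fst f" "snd f" \<alpha>] that
      unfolding R_def by simp
    have "col e \<notin> {\<alpha>, \<beta>} \<or> col e' \<notin> {\<alpha>, \<beta>}"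
      using chain[of e] chain[of e'] ee' snd False by metis
    then show ?thesis using ne by (auto simp: transpose_def)
  qed
qed

lemma proper_edge_colouring_insert:
  assumes "proper_edge_colouring F col" "(u, w) \<notin> F"
    and "\<forall>y. (u, y) \<in> F \<longrightarrow> col (u, y) \<noteq> c" "\<forall>x. (x, w) \<in> F \<longrightarrow> col (x, w) \<noteq> c"
  shows "proper_edge_colouring (insert (u, w) F) (col((u, w) := c))"
  using assms unfolding proper_edge_colouring_def by (auto 0 3 simp: prod_eq_iff)

lemma proper_edge_colouring_extend:
  assumes proper: "proper_edge_colouring F col" and lt: "\<forall>e\<in>F. col e < k"
    and bip: "fst ` insert (u, w) F \<inter> snd ` insert (u, w) F = {}" and new: "(u, w) \<notin> F"
    and "\<alpha> < k" "\<beta> < k"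
    and u_free: "\<forall>y. (u, y) \<in> F \<longrightarrow> col (u, y) \<noteq> \<alpha>" and w_free: "\<forall>x. (x, w) \<in> F \<longrightarrow> col (x, w) \<noteq> \<beta>"
  shows "\<exists>col'. proper_edge_colouring (insert (u, w) F) col' \<and> (\<forall>e\<in>insert (u, w) F. col' e < k)"
proof -
  define R where "R = kempe_chain F col \<alpha> \<beta> w"
  define col' where "col' = (\<lambda>e. if fst e \<in> R then transpose \<alpha> \<beta> (col e) else col e)"
  have bipF: "fst ` F \<inter> snd ` F = {}" and w_right: "w \<notin> fst ` F" and u_left: "u \<notin> snd ` F"
    and "u \<noteq> w"
    using bip by auto
  have proper': "proper_edge_colouring F col'"
    unfolding col'_def R_def by (rule proper_edge_colouring_kempe_swap[OF proper bipF w_right w_free])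
  have u_notin: "u \<notin> R"
    unfolding R_def by (rule not_in_kempe_chain[OF \<open>u \<noteq> w\<close> u_left u_free])
  have u_free': "\<forall>y. (u, y) \<in> F \<longrightarrow> col' (u, y) \<noteq> \<alpha>"
    using u_free u_notin unfolding col'_def by simp
  have w_free': "\<forall>x. (x, w) \<in> F \<longrightarrow> col' (x, w) \<noteq> \<alpha>"
  proof (intro allI impI)
    fix x assume e: "(x, w) \<in> F"
    have "w \<in> R" unfolding R_def by (rule kempe_chain.start)
    then have "col (x, w) = \<alpha> \<Longrightarrow> x \<in> R"
      using kempe_chain_edge_iff[OF proper bipF w_right w_free e] unfolding R_def by simp
    then show "col' (x, w) \<noteq> \<alpha>"
      using w_free e unfolding col'_def by (auto simp: transpose_def)
  qed
  have "\<forall>e\<in>insert (u, w) F. (col'((u, w) := \<alpha>)) e < k"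
    using lt \<open>\<alpha> < k\<close> \<open>\<beta> < k\<close> unfolding col'_def by (auto simp: transpose_def)
  then show ?thesis
    using proper_edge_colouring_insert[OF proper' new u_free' w_free'] by blast
qed

lemma exists_colour_not_in_image:
  assumes "finite B" "card B < k"
  shows "\<exists>\<alpha><k. \<forall>b\<in>B. f b \<noteq> \<alpha>"
proof (rule ccontr)
  assume "\<not> ?thesis"
  then have "{0..<k} \<subseteq> f ` B" by force
  then have "k \<le> card (f ` B)" using assms(1) by (metis card_atLeastLessThan card_mono finite_imageI diff_zero)
  then show False using card_image_le[OF assms(1), of f] assms(2) by linarith
qed

theorem bipartite_edge_colouring:
  assumes fin: "finite D" and bip: "fst ` D \<inter> snd ` D = {}"
    and out_deg: "\<And>x. card {y. (x, y) \<in> D} \<le> k" and in_deg: "\<And>y. card {x. (x, y) \<in> D} \<le> k"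
  shows "\<exists>col. proper_edge_colouring D col \<and> (\<forall>e\<in>D. col e < k)"
proof -
  have "\<exists>col. proper_edge_colouring F col \<and> (\<forall>e\<in>F. col e < k)" if "F \<subseteq> D" for F
    using finite_subset[OF that fin] that
  proof (induction F rule: finite_induct)
    case empty
    then show ?case by (auto simp: proper_edge_colouring_def)
  next
    case (insert e F)
    obtain u w where e: "e = (u, w)" by (cases e)
    obtain col where col: "proper_edge_colouring F col" "\<forall>e\<in>F. col e < k"
      using insert.IH insert.prems by blast
    have out_fin: "finite {y. (u, y) \<in> D}"
      by (rule finite_subset[of _ "snd ` D"]) (use fin in force)+
    have in_fin: "finite {x. (x, w) \<in> D}"
      by (rule finite_subset[of _ "fst ` D"]) (use fin in force)+
    have sub: "{y. (u, y) \<in> F} \<subset> {y. (u, y) \<in> D}" "{x. (x, w) \<in> F} \<subset> {x. (x, w) \<in> D}"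
      using insert.hyps(2) insert.prems e by auto
    then have "card {y. (u, y) \<in> F} < k" "card {x. (x, w) \<in> F} < k"
      using psubset_card_mono[OF out_fin] psubset_card_mono[OF in_fin] out_deg[of u] in_deg[of w]
      by (meson order_less_le_trans)+
    moreover have "finite {y. (u, y) \<in> F}" "finite {x. (x, w) \<in> F}"
      using finite_subset[OF psubset_imp_subset[OF sub(1)] out_fin]
        finite_subset[OF psubset_imp_subset[OF sub(2)] in_fin] .
    ultimately obtain \<alpha> \<beta> where "\<alpha> < k" "\<forall>y. (u, y) \<in> F \<longrightarrow> col (u, y) \<noteq> \<alpha>"
      and "\<beta> < k" "\<forall>x. (x, w) \<in> F \<longrightarrow> col (x, w) \<noteq> \<beta>"
      using exists_colour_not_in_image[of _ k "\<lambda>y. col (u, y)"]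
        exists_colour_not_in_image[of _ k "\<lambda>x. col (x, w)"] by (metis mem_Collect_eq)
    moreover have "fst ` insert (u, w) F \<inter> snd ` insert (u, w) F = {}"
      using bip insert.prems e by blast
    ultimately show ?case
      using proper_edge_colouring_extend[OF col] insert.hyps(2) e by blast
  qed
  then show ?thesis by blast
qed

section \<open>Matchings from colour classes\<close>

lemma card_colours_missing_vertex:
  assumes fin: "finite D" and bip: "fst ` D \<inter> snd ` D = {}"
    and proper: "proper_edge_colouring D col" and lt: "\<forall>e\<in>D. col e < K"
  shows "card {a\<in>{0..<K}. v \<notin> match_verts {e\<in>D. col e = a}}
           = K - card {y. (v, y) \<in> D} - card {x. (x, v) \<in> D}"
proof -
  define Out where "Out = {y. (v, y) \<in> D}"
  define In where "In = {x. (x, v) \<in> D}"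
  define C where "C = {a\<in>{0..<K}. v \<in> match_verts {e\<in>D. col e = a}}"
  have "finite Out" unfolding Out_def
    by (rule finite_subset[of _ "snd ` D"]) (use fin in force)+
  have "finite In" unfolding In_def
    by (rule finite_subset[of _ "fst ` D"]) (use fin in force)+
  have C_eq: "C = (\<lambda>y. col (v, y)) ` Out \<union> (\<lambda>x. col (x, v)) ` In"
    unfolding C_def match_verts_def Out_def In_def using lt by force
  have "inj_on (\<lambda>y. col (v, y)) Out" "inj_on (\<lambda>x. col (x, v)) In"
    using proper unfolding inj_on_def Out_def In_def proper_edge_colouring_def by force+
  moreover have "Out = {} \<or> In = {}"
    unfolding Out_def In_def using bip by force
  ultimately have "card C = card Out + card In"
    unfolding C_eq by (auto simp: card_image)
  moreover have "{a\<in>{0..<K}. v \<notin> match_verts {e\<in>D. col e = a}} = {0..<K} - C"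
    unfolding C_def by auto
  moreover have "C \<subseteq> {0..<K}"
    unfolding C_def by blast
  ultimately show ?thesis
    unfolding Out_def In_def by (simp add: card_Diff_subset finite_subset)
qed

lemma colour_class_bip_matching:
  assumes "X \<inter> Y = {}" "proper_edge_colouring {(x, y). x \<in> X \<and> y \<in> Y \<and> E x y} col"
  shows "bip_matching E X Y {e \<in> {(x, y). x \<in> X \<and> y \<in> Y \<and> E x y}. col e = a}"
  using assms unfolding bip_matching_def proper_edge_colouring_def by (fastforce simp: prod_eq_iff)

lemma bip_matching_decomposition:
  assumes fin: "finite X" "finite Y" and disj: "X \<inter> Y = {}" and sym: "\<And>u v. E u v \<Longrightarrow> E v u"
    and deg: "\<And>v. v \<in> X \<union> Y \<Longrightarrow> bip_degree E X Y v \<le> K"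
  shows "\<exists>M. (\<forall>a. bip_matching E X Y (M a)) \<and>
           (\<forall>v\<in>X \<union> Y. card {a\<in>{0..<K}. v \<notin> match_verts (M a)} = K - bip_degree E X Y v)"
proof -
  define D where "D = {(x, y). x \<in> X \<and> y \<in> Y \<and> E x y}"
  have "finite D"
    using fin by (rule finite_subset[rotated, OF finite_cartesian_product]) (auto simp: D_def)
  have bip: "fst ` D \<inter> snd ` D = {}"
    using disj unfolding D_def by auto
  have out: "card {y. (v, y) \<in> D} = (if v \<in> X then bip_degree E X Y v else 0)" for v
    unfolding D_def bip_degree_def by auto
  have "{x. (x, v) \<in> D} = {x \<in> X. E v x}" if "v \<in> Y" for v
    using that sym unfolding D_def by auto
  then have in_: "card {x. (x, v) \<in> D} = (if v \<in> Y then bip_degree E X Y v else 0)" for v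
    using disj unfolding bip_degree_def D_def by auto
  obtain col where col: "proper_edge_colouring D col" "\<forall>e\<in>D. col e < K"
    using bipartite_edge_colouring[OF \<open>finite D\<close> bip, of K] out in_ deg
    by (metis (no_types, lifting) Un_iff le0)
  show ?thesis
  proof (intro exI[of _ "\<lambda>a. {e\<in>D. col e = a}"] conjI allI ballI)
    show "bip_matching E X Y {e\<in>D. col e = a}" for a
      unfolding D_def by (rule colour_class_bip_matching[OF disj col(1)[unfolded D_def]])
    show "card {a\<in>{0..<K}. v \<notin> match_verts {e\<in>D. col e = a}} = K - bip_degree E X Y v"
      if "v \<in> X \<union> Y" for v
      using card_colours_missing_vertex[OF \<open>finite D\<close> bip col] out[of v] in_[of v] that disj by auto
  qed
qed

text \<open>The \<open>max 1\<close> only matters when \<open>\<Delta> < 1\<close>, where all degrees are \<open>0\<close>; it keeps the set of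
  colour choices nonempty.\<close>

lemma degree_deficit_le:
  fixes \<delta> \<Delta> x :: real
  defines "K \<equiv> max 1 (nat \<lfloor>\<Delta>\<rfloor>)"
  assumes d: "\<delta> \<le> real d" "real d \<le> \<Delta>" and ratio: "1 - \<delta> / \<Delta> \<le> x" and "0 \<le> x"
  shows "d \<le> K" "real (K - d) \<le> x * real K"
proof -
  show "d \<le> K"
    using le_nat_floor[OF d(2)] unfolding K_def by simp
  then have "real (K - d) = real K - real d" by simp
  also have "\<dots> \<le> x * real K"
  proof (cases "x < 1")
    case True
    have "\<Delta> \<noteq> 0" using ratio True by auto
    then have "\<Delta> > 0" using d by linarith
    then have dl: "(1 - x) * \<Delta> \<le> \<delta>" using ratio by (simp add: field_simps)
    then have "real d > 0" using d \<open>\<Delta> > 0\<close> True by (smt (verit) mult_pos_pos)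
    then have "K = nat \<lfloor>\<Delta>\<rfloor>" "real (nat \<lfloor>\<Delta>\<rfloor>) \<le> \<Delta>"
      using d(2) unfolding K_def by (simp_all add: le_nat_floor)
    then have "(1 - x) * real K \<le> (1 - x) * \<Delta>" using True by (intro mult_left_mono) auto
    then show ?thesis using dl d(1) by (simp add: algebra_simps)
  next
    case False
    then have "real K \<le> x * real K" by (simp add: mult_le_cancel_right1)
    then show ?thesis by simp
  qed
  finally show "real (K - d) \<le> x * real K" .
qed

lemma bip_matchings_missing_few:
  fixes \<delta> \<Delta> x :: real
  defines "K \<equiv> max 1 (nat \<lfloor>\<Delta>\<rfloor>)"
  assumes "finite X" "finite Y" "X \<inter> Y = {}" "\<And>u v. E u v \<Longrightarrow> E v u"
    and deg: "\<And>v. v \<in> X \<union> Y \<Longrightarrow> \<delta> \<le> real (bip_degree E X Y v) \<and> real (bip_degree E X Y v) \<le> \<Delta>"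
    and "1 - \<delta> / \<Delta> \<le> x" "0 \<le> x"
  shows "\<exists>M. (\<forall>a. bip_matching E X Y (M a)) \<and>
           (\<forall>v\<in>X \<union> Y. real (card {a\<in>{0..<K}. v \<notin> match_verts (M a)}) \<le> x * real K)"
proof -
  have "bip_degree E X Y v \<le> K" if "v \<in> X \<union> Y" for v
    using degree_deficit_le(1)[of \<delta> _ \<Delta> x] deg[OF that] assms(7,8) unfolding K_def by blast
  then obtain M where M: "\<forall>a. bip_matching E X Y (M a)"
    "\<forall>v\<in>X \<union> Y. card {a\<in>{0..<K}. v \<notin> match_verts (M a)} = K - bip_degree E X Y v"
    using bip_matching_decomposition[of X Y E K] assms(2-5) by blast
  have "real (K - bip_degree E X Y v) \<le> x * real K" if "v \<in> X \<union> Y" for v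
    using degree_deficit_le(2)[of \<delta> _ \<Delta> x] deg[OF that] assms(7,8) unfolding K_def by blast
  then show ?thesis
    using M by (intro exI[of _ M]) simp
qed

section \<open>Counting choice functions\<close>

lemma card_gt_mult_le_sum:
  fixes f :: "'b \<Rightarrow> real"
  assumes "finite S" "\<And>c. c \<in> S \<Longrightarrow> 0 \<le> f c"
  shows "real (card {c\<in>S. \<theta> < f c}) * \<theta> \<le> (\<Sum>c\<in>S. f c)"
proof -
  have "real (card {c\<in>S. \<theta> < f c}) * \<theta> = (\<Sum>c\<in>{c\<in>S. \<theta> < f c}. \<theta>)" by simp
  also have "\<dots> \<le> (\<Sum>c\<in>{c\<in>S. \<theta> < f c}. f c)" by (intro sum_mono) auto
  also have "\<dots> \<le> (\<Sum>c\<in>S. f c)" using assms by (intro sum_mono2) auto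
  finally show ?thesis .
qed

lemma sum_PiE_coordinate:
  fixes g :: "'b \<Rightarrow> real"
  assumes J: "finite J" "j \<in> J" and A: "finite A"
  shows "(\<Sum>c\<in>PiE J (\<lambda>_. A). g (c j)) = (\<Sum>a\<in>A. g a) * real (card A) ^ (card J - 1)"
proof -
  have "(\<Sum>c\<in>PiE J (\<lambda>_. A). g (c j)) = (\<Sum>c\<in>PiE J (\<lambda>_. A). \<Prod>j'\<in>J. if j' = j then g (c j') else 1)"
    using J by (intro sum.cong) (auto simp: prod.delta)
  also have "\<dots> = (\<Prod>j'\<in>J. \<Sum>a\<in>A. if j' = j then g a else 1)"
    using prod_sum_PiE[of J "\<lambda>_. A" "\<lambda>j' a. if j' = j then g a else 1"] J A by simp
  also have "\<dots> = (\<Sum>a\<in>A. g a) * (\<Prod>j'\<in>J - {j}. \<Sum>a\<in>A. if j' = j then g a else 1)"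
    using J by (simp add: prod.remove)
  also have "(\<Prod>j'\<in>J - {j}. \<Sum>a\<in>A. if j' = j then g a else 1) = real (card A) ^ (card J - 1)"
    using J by (simp add: prod.neutral_const)
  finally show ?thesis .
qed

lemma card_PiE_sum_gt_mult_le:
  fixes g :: "'j \<Rightarrow> 'b \<Rightarrow> real"
  assumes J: "finite J" and A: "finite A" and nonneg: "\<And>j a. j \<in> J \<Longrightarrow> a \<in> A \<Longrightarrow> 0 \<le> g j a"
    and mean: "\<And>j. j \<in> J \<Longrightarrow> (\<Sum>a\<in>A. g j a) \<le> \<mu> j * real (card A)"
  shows "real (card {c\<in>PiE J (\<lambda>_. A). \<theta> < (\<Sum>j\<in>J. g j (c j))}) * \<theta>
           \<le> real (card A) ^ card J * (\<Sum>j\<in>J. \<mu> j)"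
proof -
  have "real (card {c\<in>PiE J (\<lambda>_. A). \<theta> < (\<Sum>j\<in>J. g j (c j))}) * \<theta>
          \<le> (\<Sum>c\<in>PiE J (\<lambda>_. A). \<Sum>j\<in>J. g j (c j))"
    using J A nonneg by (intro card_gt_mult_le_sum) (auto intro: sum_nonneg simp: finite_PiE)
  also have "\<dots> = (\<Sum>j\<in>J. \<Sum>c\<in>PiE J (\<lambda>_. A). g j (c j))"
    by (rule sum.swap)
  also have "\<dots> = (\<Sum>j\<in>J. (\<Sum>a\<in>A. g j a) * real (card A) ^ (card J - 1))"
    using J A by (intro sum.cong refl) (rule sum_PiE_coordinate)
  also have "\<dots> \<le> (\<Sum>j\<in>J. \<mu> j * real (card A) * real (card A) ^ (card J - 1))"
    using mean by (intro sum_mono mult_right_mono) auto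
  also have "\<dots> = real (card A) ^ card J * (\<Sum>j\<in>J. \<mu> j)"
  proof (cases "J = {}")
    case False
    then have "real (card A) * real (card A) ^ (card J - 1) = real (card A) ^ card J"
      using J by (simp add: power_eq_if[of _ "card J"])
    then show ?thesis
      by (simp add: sum_distrib_left sum_distrib_right mult_ac)
  qed simp
  finally show ?thesis .
qed

lemma exp_le_one_plus_two_mult:
  fixes s :: real
  assumes "0 \<le> s" "s \<le> 1"
  shows "exp s \<le> 1 + 2 * s"
proof -
  have "s\<^sup>2 \<le> s" using assms by (simp add: power2_eq_square mult_left_le)
  then show ?thesis using exp_bound[OF assms] by simp
qed

lemma sum_exp_divide_le:
  fixes g :: "'b \<Rightarrow> real"
  assumes A: "finite A" and \<rho>: "\<rho> > 0" and bounded: "\<And>a. a \<in> A \<Longrightarrow> 0 \<le> g a \<and> g a \<le> \<rho>"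
    and mean: "(\<Sum>a\<in>A. g a) \<le> \<mu> * real (card A)"
  shows "(\<Sum>a\<in>A. exp (g a / \<rho>)) \<le> real (card A) * exp (2 * \<mu> / \<rho>)"
proof -
  have "(\<Sum>a\<in>A. exp (g a / \<rho>)) \<le> (\<Sum>a\<in>A. 1 + 2 * (g a / \<rho>))"
    using bounded \<rho> by (intro sum_mono exp_le_one_plus_two_mult) auto
  also have "\<dots> = real (card A) + 2 / \<rho> * (\<Sum>a\<in>A. g a)"
    by (simp add: sum.distrib sum_distrib_left)
  also have "\<dots> \<le> real (card A) + 2 / \<rho> * (\<mu> * real (card A))"
    using mean \<rho> by (intro add_left_mono mult_left_mono) auto
  also have "\<dots> = real (card A) * (1 + 2 * \<mu> / \<rho>)"
    by (simp add: field_simps)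
  also have "\<dots> \<le> real (card A) * exp (2 * \<mu> / \<rho>)"
    by (intro mult_left_mono exp_ge_add_one_self) auto
  finally show ?thesis .
qed

lemma card_PiE_sum_gt_exp_le:
  fixes g :: "'j \<Rightarrow> 'b \<Rightarrow> real"
  assumes J: "finite J" and A: "finite A" and \<rho>: "\<rho> > 0"
    and bounded: "\<And>j a. j \<in> J \<Longrightarrow> a \<in> A \<Longrightarrow> 0 \<le> g j a \<and> g j a \<le> \<rho>"
    and mean: "\<And>j. j \<in> J \<Longrightarrow> (\<Sum>a\<in>A. g j a) \<le> \<mu> * real (card A)"
  shows "real (card {c\<in>PiE J (\<lambda>_. A). \<theta> < (\<Sum>j\<in>J. g j (c j))}) * exp (\<theta> / \<rho>)
           \<le> real (card A) ^ card J * exp (2 * \<mu> * real (card J) / \<rho>)"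
proof -
  define F where "F c = (\<Prod>j\<in>J. exp (g j (c j) / \<rho>))" for c
  have F_eq: "F c = exp ((\<Sum>j\<in>J. g j (c j)) / \<rho>)" for c
    unfolding F_def using J by (simp add: exp_sum sum_divide_distrib)
  have "{c\<in>PiE J (\<lambda>_. A). \<theta> < (\<Sum>j\<in>J. g j (c j))} = {c\<in>PiE J (\<lambda>_. A). exp (\<theta> / \<rho>) < F c}"
    using \<rho> by (auto simp: F_eq divide_less_cancel)
  then have "real (card {c\<in>PiE J (\<lambda>_. A). \<theta> < (\<Sum>j\<in>J. g j (c j))}) * exp (\<theta> / \<rho>)
          \<le> (\<Sum>c\<in>PiE J (\<lambda>_. A). F c)"
    using J A by (auto intro!: card_gt_mult_le_sum simp: finite_PiE F_def prod_nonneg)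
  also have "\<dots> = (\<Prod>j\<in>J. \<Sum>a\<in>A. exp (g j a / \<rho>))"
    unfolding F_def using J A by (intro prod_sum_PiE[symmetric]) auto
  also have "\<dots> \<le> (\<Prod>j\<in>J. real (card A) * exp (2 * \<mu> / \<rho>))"
    using A \<rho> bounded mean by (intro prod_mono conjI sum_nonneg sum_exp_divide_le) auto
  also have "\<dots> = real (card A) ^ card J * exp (2 * \<mu> * real (card J) / \<rho>)"
    by (simp add: power_mult_distrib exp_of_nat_mult[symmetric] mult_ac)
  finally show ?thesis .
qed

lemma sum_card_Int_le:
  assumes I: "finite I" and W: "finite W" and N: "\<And>a. a \<in> I \<Longrightarrow> N a \<subseteq> W"
    and few: "\<And>v. v \<in> W \<Longrightarrow> real (card {a\<in>I. v \<in> N a}) \<le> m"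
  shows "(\<Sum>a\<in>I. real (card (N a \<inter> B))) \<le> m * real (card (W \<inter> B))"
proof -
  have "(\<Sum>a\<in>I. card (N a \<inter> B)) = (\<Sum>a\<in>I. card {v\<in>W \<inter> B. v \<in> N a})"
    using N by (intro sum.cong refl arg_cong[where f = card]) auto
  also have "\<dots> = (\<Sum>v\<in>W \<inter> B. card {a\<in>I. v \<in> N a})"
    using I W by (intro sum_multicount_gen) auto
  finally have "(\<Sum>a\<in>I. real (card (N a \<inter> B))) = (\<Sum>v\<in>W \<inter> B. real (card {a\<in>I. v \<in> N a}))"
    by (metis (no_types, lifting) of_nat_sum sum.cong)
  also have "\<dots> \<le> (\<Sum>v\<in>W \<inter> B. m)"
    using few by (intro sum_mono) auto
  finally show ?thesis by (simp add: mult.commute)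
qed

lemma exists_outside_small_sets:
  assumes S: "finite S" "S \<noteq> {}" and n: "n \<ge> 2"
    and "B \<subseteq> S" "\<And>i. C i \<subseteq> S"
    and B: "5 * real (card B) \<le> real (card S)"
    and C: "\<And>i. i \<in> {1..n} \<Longrightarrow> real n ^ 3 * real (card (C i)) \<le> real (card S)"
  shows "\<exists>c\<in>S. c \<notin> B \<and> (\<forall>i\<in>{1..n}. c \<notin> C i)"
proof (rule ccontr)
  assume "\<not> ?thesis"
  then have "S \<subseteq> B \<union> (\<Union>i\<in>{1..n}. C i)" by blast
  then have "card S \<le> card (B \<union> (\<Union>i\<in>{1..n}. C i))"
    by (rule card_mono[rotated]) (use S assms(4,5) in \<open>auto dest: finite_subset\<close>)
  also have "\<dots> \<le> card B + (\<Sum>i\<in>{1..n}. card (C i))"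
    using card_Un_le[of B] card_UN_le[of "{1..n}" C] by (meson add_left_mono finite_atLeastAtMost order_trans)
  finally have "card S \<le> card B + (\<Sum>i\<in>{1..n}. card (C i))" .
  then have "real (card S) \<le> real (card B) + (\<Sum>i\<in>{1..n}. real (card (C i)))"
    by (metis of_nat_add of_nat_le_iff of_nat_sum)
  also have "\<dots> \<le> real (card S) / 5 + (\<Sum>i\<in>{1..n}. real (card S) / real n ^ 3)"
    using B C n by (intro add_mono sum_mono) (auto simp: field_simps)
  also have "\<dots> = real (card S) / 5 + real (card S) / real n ^ 2"
    using n by (simp add: power_eq_if field_simps)
  also have "\<dots> < real (card S)"
  proof -
    have "(4::real) \<le> real n ^ 2" using n power_mono[of 2 "real n" 2] by simp
    then have "real (card S) / real n ^ 2 \<le> real (card S) / 4"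
      using n by (intro divide_left_mono) auto
    moreover have "0 < real (card S)" using S by (simp add: card_gt_0_iff)
    ultimately show ?thesis by linarith
  qed
  finally show False by simp
qed

lemma card_choices_uncovered_gt_le:
  fixes N :: "nat \<Rightarrow> nat \<Rightarrow> 'a set" and W :: "nat \<Rightarrow> 'a set" and x :: real
  assumes J: "finite J" and x: "x > 0"
    and W: "\<And>j. j \<in> J \<Longrightarrow> finite (W j)" and N: "\<And>j a. j \<in> J \<Longrightarrow> N j a \<subseteq> W j"
    and few: "\<And>j v. j \<in> J \<Longrightarrow> v \<in> W j \<Longrightarrow> real (card {a\<in>{0..<K}. v \<in> N j a}) \<le> x * real K"
  shows "5 * real (card {c\<in>PiE J (\<lambda>_. {0..<K}).
                 5 * x * (\<Sum>j\<in>J. real (card (W j))) < (\<Sum>j\<in>J. real (card (N j (c j))))})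
           \<le> real K ^ card J" (is "5 * real (card ?B) \<le> _")
proof (cases "(\<Sum>j\<in>J. real (card (W j))) = 0")
  case True
  then have "N j a = {}" if "j \<in> J" for j a
    using N[OF that] W[OF that] that J by (auto simp: sum_nonneg_eq_0_iff)
  then show ?thesis using True by (simp add: sum_nonneg_eq_0_iff)
next
  case False
  define \<Sigma> where "\<Sigma> = (\<Sum>j\<in>J. real (card (W j)))"
  have pos: "0 < x * \<Sigma>"
    using False x unfolding \<Sigma>_def by (simp add: sum_nonneg order_less_le)
  have "(\<Sum>a\<in>{0..<K}. real (card (N j a))) \<le> x * real (card (W j)) * real K" if "j \<in> J" for j
    using sum_card_Int_le[of "{0..<K}" "W j" "N j" "x * real K" UNIV] W N few that by (simp add: mult_ac)
  then have "real (card ?B) * (5 * x * \<Sigma>) \<le> real K ^ card J * (\<Sum>j\<in>J. x * real (card (W j)))"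
    using card_PiE_sum_gt_mult_le[OF J finite_atLeastLessThan[of 0 K], where g = "\<lambda>j a. real (card (N j a))"
        and \<mu> = "\<lambda>j. x * real (card (W j))" and \<theta> = "5 * x * \<Sigma>"]
    unfolding \<Sigma>_def by simp
  moreover have "(\<Sum>j\<in>J. x * real (card (W j))) = x * \<Sigma>"
    unfolding \<Sigma>_def by (simp add: sum_distrib_left)
  ultimately have "(5 * real (card ?B)) * (x * \<Sigma>) \<le> real K ^ card J * (x * \<Sigma>)"
    by (simp add: mult_ac)
  then show ?thesis
    using pos by (rule mult_right_le_imp_le)
qed

lemma card_choices_uncovered_Int_gt_le:
  fixes N :: "nat \<Rightarrow> nat \<Rightarrow> 'a set" and W :: "nat \<Rightarrow> 'a set" and x \<rho> L :: real
  assumes J: "finite J" and x: "x > 0" and "\<rho> \<ge> 0"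
    and W: "\<And>j. j \<in> J \<Longrightarrow> finite (W j)" and N: "\<And>j a. j \<in> J \<Longrightarrow> N j a \<subseteq> W j"
    and few: "\<And>j v. j \<in> J \<Longrightarrow> v \<in> W j \<Longrightarrow> real (card {a\<in>{0..<K}. v \<in> N j a}) \<le> x * real K"
    and B: "\<And>j. j \<in> J \<Longrightarrow> real (card (W j \<inter> B)) \<le> \<rho>" and L: "real (card J) \<le> L"
  shows "exp (3 * x * L) * real (card {c\<in>PiE J (\<lambda>_. {0..<K}).
                 5 * \<rho> * x * L < (\<Sum>j\<in>J. real (card (N j (c j) \<inter> B)))})
           \<le> real K ^ card J" (is "exp (3 * x * L) * real (card ?C) \<le> _")
proof (cases "\<rho> = 0")
  case True
  then have "N j a \<inter> B = {}" if "j \<in> J" for j a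
    using B[OF that] N[OF that] W[OF that] by auto
  then show ?thesis using True by simp
next
  case False
  then have "\<rho> > 0" using \<open>\<rho> \<ge> 0\<close> by simp
  have bounded: "real (card (N j a \<inter> B)) \<le> \<rho>" if "j \<in> J" for j a
    using card_mono[of "W j \<inter> B" "N j a \<inter> B"] W[OF that] N[OF that] B[OF that] by force
  have "(\<Sum>a\<in>{0..<K}. real (card (N j a \<inter> B))) \<le> x * \<rho> * real K" if "j \<in> J" for j
  proof -
    have "(\<Sum>a\<in>{0..<K}. real (card (N j a \<inter> B))) \<le> x * real K * real (card (W j \<inter> B))"
      using sum_card_Int_le[of "{0..<K}" "W j" "N j" "x * real K" B] W N few that by simp
    also have "\<dots> \<le> x * \<rho> * real K"
      using mult_left_mono[OF B[OF that], of "x * real K"] x by (simp add: mult_ac)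
    finally show ?thesis .
  qed
  then have "real (card ?C) * exp (5 * x * L)
          \<le> real K ^ card J * exp (2 * (x * \<rho>) * real (card J) / \<rho>)"
    using card_PiE_sum_gt_exp_le[OF J _ \<open>\<rho> > 0\<close>, of "{0..<K}" "\<lambda>j a. real (card (N j a \<inter> B))"
        "x * \<rho>" "5 * \<rho> * x * L"] bounded \<open>\<rho> > 0\<close>
    by (simp add: mult.assoc)
  also have "\<dots> \<le> real K ^ card J * exp (2 * x * L)"
    using \<open>\<rho> > 0\<close> x L by (intro mult_left_mono) auto
  finally have "real (card ?C) * exp (5 * x * L) \<le> real K ^ card J * exp (2 * x * L)" .
  moreover have "exp (5 * x * L) = exp (3 * x * L) * exp (2 * x * L)"
    by (simp add: algebra_simps flip: exp_add)
  ultimately have "(exp (3 * x * L) * real (card ?C)) * exp (2 * x * L) \<le> real K ^ card J * exp (2 * x * L)"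
    by (simp only: mult_ac)
  then show ?thesis
    by (rule mult_right_le_imp_le) simp
qed

lemma exists_choice_few_uncovered:
  fixes N :: "nat \<Rightarrow> nat \<Rightarrow> 'a set" and W T :: "nat \<Rightarrow> 'a set" and x \<rho> L :: real
  assumes J: "finite J" and K: "K \<ge> 1" and n: "n \<ge> 2" and x: "x > 0" and \<rho>: "\<rho> \<ge> 0"
    and W: "\<And>j. j \<in> J \<Longrightarrow> finite (W j)" and N: "\<And>j a. j \<in> J \<Longrightarrow> N j a \<subseteq> W j"
    and few: "\<And>j v. j \<in> J \<Longrightarrow> v \<in> W j \<Longrightarrow> real (card {a\<in>{0..<K}. v \<in> N j a}) \<le> x * real K"
    and T: "\<And>i j. i \<in> {1..n} \<Longrightarrow> j \<in> J \<Longrightarrow> real (card (W j \<inter> T i)) \<le> \<rho>"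
    and L: "real (card J) \<le> L" "real n ^ 3 \<le> exp (3 * x * L)"
  shows "\<exists>c. (\<Sum>j\<in>J. real (card (N j (c j)))) \<le> 5 * x * (\<Sum>j\<in>J. real (card (W j)))
           \<and> (\<forall>i\<in>{1..n}. (\<Sum>j\<in>J. real (card (N j (c j) \<inter> T i))) \<le> 5 * \<rho> * x * L)"
proof -
  define S where "S = PiE J (\<lambda>_. {0..<K})"
  define B where "B = {c\<in>S. 5 * x * (\<Sum>j\<in>J. real (card (W j))) < (\<Sum>j\<in>J. real (card (N j (c j))))}"
  define C where "C i = {c\<in>S. 5 * \<rho> * x * L < (\<Sum>j\<in>J. real (card (N j (c j) \<inter> T i)))}" for i
  have card_S: "real (card S) = real K ^ card J"
    unfolding S_def using J by (simp add: card_PiE)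
  have "finite S" "S \<noteq> {}"
    unfolding S_def using J K by (auto simp: finite_PiE PiE_eq_empty_iff)
  have "5 * real (card B) \<le> real K ^ card J"
    unfolding B_def S_def by (rule card_choices_uncovered_gt_le[OF J x W N few])
  then have bound_B: "5 * real (card B) \<le> real (card S)"
    using card_S by simp
  have bound_C: "real n ^ 3 * real (card (C i)) \<le> real (card S)" if "i \<in> {1..n}" for i
  proof -
    have "real n ^ 3 * real (card (C i)) \<le> exp (3 * x * L) * real (card (C i))"
      using L(2) by (rule mult_right_mono) simp
    also have "\<dots> \<le> real K ^ card J"
      unfolding C_def S_def by (rule card_choices_uncovered_Int_gt_le[OF J x \<rho> W N few T[OF that] L(1)])
    finally show ?thesis using card_S by simp
  qed
  have sub: "B \<subseteq> S" "\<And>i. C i \<subseteq> S"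
    unfolding B_def C_def by blast+
  have "\<exists>c\<in>S. c \<notin> B \<and> (\<forall>i\<in>{1..n}. c \<notin> C i)"
    by (rule exists_outside_small_sets[OF \<open>finite S\<close> \<open>S \<noteq> {}\<close> n sub bound_B]) (rule bound_C)
  then obtain c where "c \<in> S" "c \<notin> B" "\<forall>i\<in>{1..n}. c \<notin> C i"
    by blast
  then show ?thesis
    unfolding B_def C_def by (auto simp: not_less)
qed

section \<open>Chains of matchings\<close>

definition uncovered_vertices :: "(nat \<Rightarrow> 'a set) \<Rightarrow> nat \<Rightarrow> (nat \<Rightarrow> ('a \<times> 'a) set) \<Rightarrow> 'a set" where
  "uncovered_vertices V t M =
     {y \<in> V 1 \<union> V t. y \<notin> match_verts (M 1) \<and> y \<notin> match_verts (M (t-1))}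
     \<union> {y. \<exists>j \<in> {2..t-1}. y \<in> V j \<and> \<not> (y \<in> match_verts (M (j-1)) \<and> y \<in> match_verts (M j))}"

lemma uncovered_vertices_subset:
  assumes "t \<ge> 2"
  shows "uncovered_vertices V t M \<subseteq> (\<Union>j\<in>{1..t-1}. (V j \<union> V (j+1)) - match_verts (M j))"
proof
  fix y assume y: "y \<in> uncovered_vertices V t M"
  have t: "t - 1 \<in> {1..t-1}" "t - 1 + 1 = t" using assms by auto
  show "y \<in> (\<Union>j\<in>{1..t-1}. (V j \<union> V (j+1)) - match_verts (M j))"
  proof (cases "y \<in> V 1 \<union> V t \<and> y \<notin> match_verts (M 1) \<and> y \<notin> match_verts (M (t-1))")
    case True
    then consider "y \<in> V 1" | "y \<in> V (t - 1 + 1)" using t by auto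
    then show ?thesis
    proof cases
      case 1
      then show ?thesis using True assms by (intro UN_I[of 1]) auto
    next
      case 2
      then show ?thesis using True t by (intro UN_I[of "t - 1"]) auto
    qed
  next
    case False
    then obtain j where j: "j \<in> {2..t-1}" "y \<in> V j"
      "\<not> (y \<in> match_verts (M (j-1)) \<and> y \<in> match_verts (M j))"
      using y unfolding uncovered_vertices_def by blast
    then have "j - 1 \<in> {1..t-1}" "j - 1 + 1 = j" "j \<in> {1..t-1}" by auto
    then show ?thesis
    proof (cases "y \<in> match_verts (M (j-1))")
      case True
      then show ?thesis using j \<open>j \<in> {1..t-1}\<close> by (intro UN_I[of j]) auto
    next
      case False
      then show ?thesis using j \<open>j - 1 \<in> {1..t-1}\<close> \<open>j - 1 + 1 = j\<close>
        by (intro UN_I[of "j - 1"]) auto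
    qed
  qed
qed

lemma card_uncovered_vertices_Int_le:
  assumes "t \<ge> 2" and fin: "\<And>j. j \<in> {1..t} \<Longrightarrow> finite (V j)"
  shows "card (uncovered_vertices V t M \<inter> B)
           \<le> (\<Sum>j\<in>{1..t-1}. card (((V j \<union> V (j+1)) - match_verts (M j)) \<inter> B))"
proof -
  have "finite (((V j \<union> V (j+1)) - match_verts (M j)) \<inter> B)" if "j \<in> {1..t-1}" for j
    using fin[of j] fin[of "j+1"] that by auto
  then have "finite (\<Union>j\<in>{1..t-1}. ((V j \<union> V (j+1)) - match_verts (M j)) \<inter> B)"
    by blast
  moreover have "uncovered_vertices V t M \<inter> B
                   \<subseteq> (\<Union>j\<in>{1..t-1}. ((V j \<union> V (j+1)) - match_verts (M j)) \<inter> B)"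
    using uncovered_vertices_subset[OF assms(1), of V M] by blast
  ultimately have "card (uncovered_vertices V t M \<inter> B)
               \<le> card (\<Union>j\<in>{1..t-1}. ((V j \<union> V (j+1)) - match_verts (M j)) \<inter> B)"
    by (rule card_mono)
  also have "\<dots> \<le> (\<Sum>j\<in>{1..t-1}. card (((V j \<union> V (j+1)) - match_verts (M j)) \<inter> B))"
    by (rule card_UN_le) simp
  finally show ?thesis .
qed

lemma sum_card_consecutive_le:
  fixes V :: "nat \<Rightarrow> 'a set"
  assumes fin: "\<And>j. j \<in> {1..t} \<Longrightarrow> finite (V j)"
    and disj: "\<And>i j. i \<in> {1..t} \<Longrightarrow> j \<in> {1..t} \<Longrightarrow> i \<noteq> j \<Longrightarrow> V i \<inter> V j = {}"
  shows "(\<Sum>j\<in>{1..t-1}. card (V j \<union> V (j+1))) \<le> 2 * card (\<Union>i\<in>{1..t}. V i)"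
proof -
  let ?c = "\<lambda>i. card (V i)"
  have "(\<Sum>j\<in>{1..t-1}. card (V j \<union> V (j+1))) \<le> (\<Sum>j\<in>{1..t-1}. ?c j + ?c (Suc j))"
    by (intro sum_mono) (simp add: card_Un_le)
  also have "\<dots> = sum ?c {1..t-1} + sum ?c {Suc 1..Suc (t-1)}"
    by (simp only: sum.distrib sum.shift_bounds_cl_Suc_ivl)
  also have "\<dots> \<le> sum ?c {1..t} + sum ?c {1..t}"
    by (intro add_mono sum_mono2) auto
  also have "sum ?c {1..t} = card (\<Union>i\<in>{1..t}. V i)"
    using fin disj by (intro card_UN_disjoint[symmetric]) auto
  finally show ?thesis by simp
qed

lemma cube_le_exp_of_log2_le:
  fixes z y :: real
  assumes "1 \<le> z" "log 2 z \<le> y"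
  shows "z ^ 3 \<le> exp (3 * y)"
proof -
  have "0 \<le> y" using assms by (smt (verit) zero_le_log_cancel_iff)
  have "z = 2 powr log 2 z" using assms by simp
  also have "\<dots> \<le> 2 powr y" using assms(2) by (rule powr_mono) simp
  also have "\<dots> = exp (y * ln 2)" by (simp add: powr_def)
  also have "\<dots> \<le> exp y" using \<open>0 \<le> y\<close> ln_2_less_1 by (simp add: mult_left_le)
  finally have "z ^ 3 \<le> exp y ^ 3" using assms by (intro power_mono) auto
  then show ?thesis by (simp add: exp_of_nat_mult[symmetric])
qed

lemma exists_chain_matching_families:
  fixes V :: "nat \<Rightarrow> 'a set" and \<delta> \<Delta> x :: real
  defines "K \<equiv> max 1 (nat \<lfloor>\<Delta>\<rfloor>)"
  assumes finV: "\<And>j. j \<in> {1..t} \<Longrightarrow> finite (V j)"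
    and Vdisj: "\<And>i j. i \<in> {1..t} \<Longrightarrow> j \<in> {1..t} \<Longrightarrow> i \<noteq> j \<Longrightarrow> V i \<inter> V j = {}"
    and sym: "\<And>u v. E u v \<Longrightarrow> E v u"
    and deg: "\<And>j v. j \<in> {1..t-1} \<Longrightarrow> v \<in> V j \<union> V (j+1) \<Longrightarrow>
                 \<delta> \<le> real (bip_degree E (V j) (V (j+1)) v) \<and> real (bip_degree E (V j) (V (j+1)) v) \<le> \<Delta>"
    and ratio: "1 - \<delta> / \<Delta> \<le> x" and "0 \<le> x"
  shows "\<exists>Mat. \<forall>j\<in>{1..t-1}. (\<forall>a. bip_matching E (V j) (V (j+1)) (Mat j a))
           \<and> (\<forall>v\<in>V j \<union> V (j+1). real (card {a\<in>{0..<K}. v \<notin> match_verts (Mat j a)}) \<le> x * real K)"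
proof (intro bchoice ballI)
  fix j assume j: "j \<in> {1..t-1}"
  then have "j \<in> {1..t}" "j + 1 \<in> {1..t}" "j \<noteq> j + 1" by auto
  then show "\<exists>Mj. (\<forall>a. bip_matching E (V j) (V (j+1)) (Mj a))
           \<and> (\<forall>v\<in>V j \<union> V (j+1). real (card {a\<in>{0..<K}. v \<notin> match_verts (Mj a)}) \<le> x * real K)"
    unfolding K_def
    by (intro bip_matchings_missing_few[OF finV finV Vdisj sym deg[OF j] ratio \<open>0 \<le> x\<close>])
qed

lemma exists_chain_matchings_few_uncovered:
  fixes VG :: "'a set" and V T :: "nat \<Rightarrow> 'a set" and \<delta> \<Delta> x L :: real
  assumes graph: "simple_graph VG E" and n2: "n \<ge> 2" and t2: "t \<ge> 2"
    and Vsub: "\<And>j. j \<in> {1..t} \<Longrightarrow> V j \<subseteq> VG"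
    and Vdisj: "\<And>i j. i \<in> {1..t} \<Longrightarrow> j \<in> {1..t} \<Longrightarrow> i \<noteq> j \<Longrightarrow> V i \<inter> V j = {}"
    and deg: "\<And>j v. j \<in> {1..t-1} \<Longrightarrow> v \<in> V j \<union> V (j+1) \<Longrightarrow>
                 \<delta> \<le> real (bip_degree E (V j) (V (j+1)) v) \<and> real (bip_degree E (V j) (V (j+1)) v) \<le> \<Delta>"
    and Tr: "\<And>i j. i \<in> {1..n} \<Longrightarrow> j \<in> {1..t} \<Longrightarrow> card (T i \<inter> V j) \<le> r"
    and ratio: "1 - \<delta> / \<Delta> \<le> x" and "x > 0" and L: "real t \<le> L" "real n ^ 3 \<le> exp (3 * x * L)"
  shows "\<exists>M. (\<forall>j\<in>{1..t-1}. bip_matching E (V j) (V (j+1)) (M j))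
           \<and> real (card (uncovered_vertices V t M)) \<le> 10 * x * real (card (\<Union>i\<in>{1..t}. V i))
           \<and> (\<forall>i\<in>{1..n}. real (card (uncovered_vertices V t M \<inter> T i)) \<le> 10 * real r * x * L)"
proof -
  define K where "K = max 1 (nat \<lfloor>\<Delta>\<rfloor>)"
  define J where "J = {1..t-1}"
  define W where "W j = V j \<union> V (j+1)" for j
  have J: "j \<in> {1..t}" "j + 1 \<in> {1..t}" if "j \<in> J" for j
    using that unfolding J_def by auto
  have finV: "finite (V j)" if "j \<in> {1..t}" for j
    using graph Vsub[OF that] finite_subset unfolding simple_graph_def by blast
  have sym: "E u v \<Longrightarrow> E v u" for u v
    using graph unfolding simple_graph_def by blast
  obtain Mat where "\<forall>j\<in>J. (\<forall>a. bip_matching E (V j) (V (j+1)) (Mat j a))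
          \<and> (\<forall>v\<in>W j. real (card {a\<in>{0..<K}. v \<notin> match_verts (Mat j a)}) \<le> x * real K)"
    using exists_chain_matching_families[where V = V and t = t and E = E, OF finV Vdisj sym deg ratio less_imp_le[OF \<open>x > 0\<close>]]
    unfolding J_def W_def K_def by blast
  then have matching: "\<And>j a. j \<in> J \<Longrightarrow> bip_matching E (V j) (V (j+1)) (Mat j a)"
    and few: "\<And>j v. j \<in> J \<Longrightarrow> v \<in> W j \<Longrightarrow> real (card {a\<in>{0..<K}. v \<notin> match_verts (Mat j a)}) \<le> x * real K"
    by blast+
  have W_T: "real (card (W j \<inter> T i)) \<le> 2 * real r" if "i \<in> {1..n}" "j \<in> J" for i j
  proof -
    have "card (W j \<inter> T i) \<le> card (T i \<inter> V j) + card (T i \<inter> V (j+1))"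
      unfolding W_def by (metis Int_Un_distrib Int_commute card_Un_le)
    then show ?thesis using Tr[OF that(1) J(1)[OF that(2)]] Tr[OF that(1) J(2)[OF that(2)]] by linarith
  qed
  have few': "real (card {a\<in>{0..<K}. v \<in> W j - match_verts (Mat j a)}) \<le> x * real K"
    if "j \<in> J" "v \<in> W j" for j v
    using few[OF that] that(2) by simp
  have "finite (W j)" if "j \<in> J" for j
    using finV J that unfolding W_def by blast
  moreover have "real (card J) \<le> L" "finite J" "K \<ge> 1" "0 \<le> 2 * real r"
    using L(1) unfolding J_def K_def by auto
  ultimately obtain c where c:
    "(\<Sum>j\<in>J. real (card (W j - match_verts (Mat j (c j))))) \<le> 5 * x * (\<Sum>j\<in>J. real (card (W j)))"
    "\<forall>i\<in>{1..n}. (\<Sum>j\<in>J. real (card ((W j - match_verts (Mat j (c j))) \<inter> T i))) \<le> 5 * (2 * real r) * x * L"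
    using exists_choice_few_uncovered[of J K n x "2 * real r" W "\<lambda>j a. W j - match_verts (Mat j a)" T L]
      n2 \<open>x > 0\<close> L(2) W_T few' by blast
  define M where "M j = Mat j (c j)" for j
  have Y: "real (card (uncovered_vertices V t M \<inter> B)) \<le> (\<Sum>j\<in>J. real (card ((W j - match_verts (M j)) \<inter> B)))" for B
    using card_uncovered_vertices_Int_le[OF t2 finV, where M = M and B = B]
    unfolding J_def W_def of_nat_sum[symmetric] of_nat_le_iff .
  have "real (card (uncovered_vertices V t M)) \<le> 5 * x * (\<Sum>j\<in>J. real (card (W j)))"
    using Y[of UNIV] c(1) unfolding M_def by simp
  also have "\<dots> \<le> 5 * x * (2 * real (card (\<Union>i\<in>{1..t}. V i)))"
    using sum_card_consecutive_le[where V = V and t = t, OF finV Vdisj] \<open>x > 0\<close>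
    unfolding J_def W_def of_nat_sum[symmetric] by (intro mult_left_mono) linarith+
  finally have "real (card (uncovered_vertices V t M)) \<le> 10 * x * real (card (\<Union>i\<in>{1..t}. V i))"
    by simp
  moreover have "real (card (uncovered_vertices V t M \<inter> T i)) \<le> 10 * real r * x * L" if "i \<in> {1..n}" for i
    using Y[of "T i"] c(2) that unfolding M_def by fastforce
  moreover have "\<forall>j\<in>{1..t-1}. bip_matching E (V j) (V (j+1)) (M j)"
    using matching unfolding M_def J_def by blast
  ultimately show ?thesis
    by blast
qed

theorem mainTheorem9:
  fixes VG :: "'a set" and E :: "'a \<Rightarrow> 'a \<Rightarrow> bool"
    and n t r :: nat and \<delta> \<Delta> :: real
    and V :: "nat \<Rightarrow> 'a set" and T :: "nat \<Rightarrow> 'a set"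
  assumes graph: "simple_graph VG E"
    and n2: "n \<ge> 2" and t2: "t \<ge> 2"
    and Vsub: "\<And>j. j \<in> {1..t} \<Longrightarrow> V j \<subseteq> VG"
    and Vdisj: "\<And>i j. i \<in> {1..t} \<Longrightarrow> j \<in> {1..t} \<Longrightarrow> i \<noteq> j \<Longrightarrow> V i \<inter> V j = {}"
    and deg: "\<And>j v. j \<in> {1..t-1} \<Longrightarrow> v \<in> V j \<union> V (j+1) \<Longrightarrow>
                 \<delta> \<le> real (bip_degree E (V j) (V (j+1)) v) \<and>
                 real (bip_degree E (V j) (V (j+1)) v) \<le> \<Delta>"
    and Tsub: "\<And>i. i \<in> {1..n} \<Longrightarrow> T i \<subseteq> VG"
    and Tr: "\<And>i j. i \<in> {1..n} \<Longrightarrow> j \<in> {1..t} \<Longrightarrow> card (T i \<inter> V j) \<le> r"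
    and ratio: "1 - \<delta> / \<Delta> \<le> real t powr (-1/2) * log 2 (real n)"
  shows "\<exists>M :: nat \<Rightarrow> ('a \<times> 'a) set.
           (\<forall>j \<in> {1..t-1}. bip_matching E (V j) (V (j+1)) (M j)) \<and>
           (let Y = {y \<in> V 1 \<union> V t. y \<notin> match_verts (M 1) \<and> y \<notin> match_verts (M (t-1))}
                  \<union> {y. \<exists>j \<in> {2..t-1}. y \<in> V j \<and>
                        \<not> (y \<in> match_verts (M (j-1)) \<and> y \<in> match_verts (M j))}
            in real (card Y) \<le> 10 * real (card (\<Union>i\<in>{1..t}. V i)) * real t powr (-1/2) * log 2 (real n)
               \<and> (\<forall>i \<in> {1..n}. real (card (Y \<inter> T i)) \<le> 10 * real r * sqrt (real t) * log 2 (real n)))"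
proof -
  define x where "x = real t powr (-1/2) * log 2 (real n)"
  have "sqrt (real t) \<ge> 1" "log 2 (real n) \<ge> 1"
    using t2 n2 by auto
  have "x > 0"
    unfolding x_def using t2 n2 by simp
  have x_t: "x * real t = sqrt (real t) * log 2 (real n)"
    unfolding x_def using t2 by (simp add: powr_minus_divide powr_half_sqrt field_simps flip: real_sqrt_mult)
  have "log 2 (real n) \<le> x * real t"
    unfolding x_t using \<open>sqrt (real t) \<ge> 1\<close> \<open>log 2 (real n) \<ge> 1\<close> by (simp add: mult_le_cancel_right1)
  then have "real n ^ 3 \<le> exp (3 * x * real t)"
    using cube_le_exp_of_log2_le[of "real n"] n2 by (simp add: mult.assoc)
  then obtain M where "\<forall>j\<in>{1..t-1}. bip_matching E (V j) (V (j+1)) (M j)"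
    and M: "real (card (uncovered_vertices V t M)) \<le> 10 * x * real (card (\<Union>i\<in>{1..t}. V i))"
      "\<forall>i\<in>{1..n}. real (card (uncovered_vertices V t M \<inter> T i)) \<le> 10 * real r * x * real t"
    using exists_chain_matchings_few_uncovered[where V = V and T = T and L = "real t",
        OF graph n2 t2 Vsub Vdisj deg Tr ratio[folded x_def] \<open>x > 0\<close> order_refl] by blast
  moreover have "real (card (uncovered_vertices V t M))
      \<le> 10 * real (card (\<Union>i\<in>{1..t}. V i)) * real t powr (-1/2) * log 2 (real n)"
    using M(1) unfolding x_def by (simp add: mult_ac)
  moreover have "\<forall>i\<in>{1..n}. real (card (uncovered_vertices V t M \<inter> T i))
      \<le> 10 * real r * sqrt (real t) * log 2 (real n)"
    using M(2) x_t by (simp add: mult.assoc)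
  ultimately show ?thesis
    unfolding Let_def uncovered_vertices_def[symmetric] by blast
qed

end
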